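(* Let $N\ge2$, $J=1$, let $h_0,h_1\in\mathbb{R}^N$ satisfy $\|h_0\|=\|h_1\|=1$ and $h_0^{\sf T}h_1=\sin\tau$ with $\tau\in(-\pi/2,\pi/2)$, let $\sigma_0^2,\sigma_1^2,\sigma_n^2>0$ and $c_1\in[-\sigma_0\sigma_1,\sigma_0\sigma_1]$. Then for all $\lambda\ge0$, \[ \mathrm{MSE}(\lambda)=\frac{\delta^2(\sigma_1^2\cos^2\tau+\sigma_n^2)}{g(\lambda)^2}-\frac{2\sigma_n^2\delta\tan\tau}{g(\lambda)}+\sigma_n^2(\tan^2\tau+1), \] where $\delta:=\sigma_n^2\tan\tau-c_1\cos\tau$ and $g(\lambda):=\lambda\cos^2\tau+\sigma_1^2\cos^2\tau+\sigma_n^2>0$. Moreover: 1. If $\delta=0$, then $\mathrm{MSE}(\lambda)=\sigma_n^2(\tan^2\tau+1)$ for all $\lambda\ge0$. 2. If $\delta\ne0$ and $\gamma:=\sigma_n^2\tan\tau/\delta\le0$, then $\mathrm{MSE}(\lambda)$ is decreasing on $[0,\infty)$ and $\inf_{\lambda\ge0}\mathrm{MSE}(\lambda)=\lim_{\lambda\to\infty}\mathrm{MSE}(\lambda)=J_{\rm MSE}(w_{\rm ZF})$, i.e., the ZF beamformer is MSE-optimal among the RZF family. 3. If $\delta\neq0$ and $\gamma>0$, then $\mathrm{MSE}$ is minimized over $[0,\infty)$ by $\lambda=-\dfrac{c_1(\sigma_1^2\cos^2\tau+\sigma_n^2)}{\sigma_n^2\sin\tau}$ (which is $>0$) if $\gamma\in(0,1)$,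 and by $\lambda=0$ if $\gamma\ge1$.
   Context: Real-valued single-interference model: $y(k)=s_0(k)h_0+s_1(k)h_1+n(k)\in\mathbb{R}^N$, with real zero-mean jointly weakly stationary signals $s_0,s_1$, $\sigma_j^2:=E[s_j(k)^2]$, $c_1:=E[s_0(k)s_1(k)]$, and real zero-mean noise $n(k)\sim\mathcal{N}(0,\sigma_n^2I)$ uncorrelated with the signals. $R:=E[y(k)y(k)^{\sf T}]$. For $\lambda\ge0$, $R_\lambda:=R+\lambda h_1h_1^{\sf T}$ and the RZF beamformer is $w_{\rm RZF}(\lambda):=R_\lambda^{-1}h_0/(h_0^{\sf T}R_\lambda^{-1}h_0)$. The ZF beamformer is $w_{\rm ZF}:=R^{-1}H(H^{\sf T}R^{-1}H)^{-1}e_1$ with $H:=[h_0\ h_1]$ and $e_1:=[1,0]^{\sf T}$. The MSE of a beamformer $w$ is $J_{\rm MSE}(w):=E[(w^{\sf T}y(k)-s_0(k))^2]$, and $\mathrm{MSE}(\lambda):=J_{\rm MSE}(w_{\rm RZF}(\lambda))$. *)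

theory Defs
  imports "HOL-Analysis.Analysis"
begin

text \<open>Second-order statistics of the real single-interference model
  y = s0 h0 + s1 h1 + n.  All quantities below are the expectations written out
  in terms of sigma0^2 = E[s0^2], sigma1^2 = E[s1^2], c1 = E[s0 s1],
  E[n n^T] = sigman^2 I, with noise uncorrelated with the signals.\<close>

definition outer :: "real ^ 'n \<Rightarrow> real ^ 'n \<Rightarrow> real ^ 'n ^ 'n" where
  "outer x y = (\<chi> i j. x $ i * y $ j)"

definition Rmat :: "real \<Rightarrow> real \<Rightarrow> real \<Rightarrow> real \<Rightarrow> real ^ 'n \<Rightarrow> real ^ 'n \<Rightarrow> real ^ 'n ^ 'n" where
  "Rmat s0 s1 c1 sn h0 h1 =
     s0\<^sup>2 *\<^sub>R outer h0 h0 + s1\<^sup>2 *\<^sub>R outer h1 h1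
     + c1 *\<^sub>R (outer h0 h1 + outer h1 h0) + sn\<^sup>2 *\<^sub>R mat 1"

definition rvec :: "real \<Rightarrow> real \<Rightarrow> real ^ 'n \<Rightarrow> real ^ 'n \<Rightarrow> real ^ 'n" where
  "rvec s0 c1 h0 h1 = s0\<^sup>2 *\<^sub>R h0 + c1 *\<^sub>R h1"

text \<open>J_MSE(w) = E[(w^T y - s0)^2] = w^T R w - 2 w^T E[y s0] + E[s0^2]\<close>
definition J_MSE :: "real \<Rightarrow> real \<Rightarrow> real \<Rightarrow> real \<Rightarrow> real ^ 'n \<Rightarrow> real ^ 'n \<Rightarrow> real ^ 'n \<Rightarrow> real" where
  "J_MSE s0 s1 c1 sn h0 h1 w =
     w \<bullet> (Rmat s0 s1 c1 sn h0 h1 *v w) - 2 * (w \<bullet> rvec s0 c1 h0 h1) + s0\<^sup>2"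

definition w_RZF :: "real \<Rightarrow> real \<Rightarrow> real \<Rightarrow> real \<Rightarrow> real ^ 'n \<Rightarrow> real ^ 'n \<Rightarrow> real \<Rightarrow> real ^ 'n" where
  "w_RZF s0 s1 c1 sn h0 h1 lam =
     (let Rl = Rmat s0 s1 c1 sn h0 h1 + lam *\<^sub>R outer h1 h1;
          v = matrix_inv Rl *v h0
      in (1 / (h0 \<bullet> v)) *\<^sub>R v)"

definition Hmat :: "real ^ 'n \<Rightarrow> real ^ 'n \<Rightarrow> real ^ 2 ^ 'n" where
  "Hmat h0 h1 = (\<chi> i j. if j = 0 then h0 $ i else h1 $ i)"

definition e1 :: "real ^ 2" where
  "e1 = (\<chi> j. if j = 0 then 1 else 0)"

definition w_ZF :: "real \<Rightarrow> real \<Rightarrow> real \<Rightarrow> real \<Rightarrow> real ^ 'n \<Rightarrow> real ^ 'n \<Rightarrow> real ^ 'n" where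
  "w_ZF s0 s1 c1 sn h0 h1 =
     (let Ri = matrix_inv (Rmat s0 s1 c1 sn h0 h1); H = Hmat h0 h1
      in (Ri ** H ** matrix_inv (transpose H ** Ri ** H)) *v e1)"

definition MSE :: "real \<Rightarrow> real \<Rightarrow> real \<Rightarrow> real \<Rightarrow> real ^ 'n \<Rightarrow> real ^ 'n \<Rightarrow> real \<Rightarrow> real" where
  "MSE s0 s1 c1 sn h0 h1 lam = J_MSE s0 s1 c1 sn h0 h1 (w_RZF s0 s1 c1 sn h0 h1 lam)"

end

theory Submission
  imports Defs "HOL-Real_Asymp.Real_Asymp"
begin

(* Taking inner products of R_lambda v = h0 with h0 and h1 gives two scalar equations for
   p = h0 . v and q = h1 . v, and J_MSE(v / p) depends on v only through p and q.  Eliminating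
   them, MSE(lambda) becomes the parabola delta^2 (A u^2 - 2 gamma u) + sigman^2 (tan^2 tau + 1)
   in u = 1 / g(lambda), where A = sigma1^2 cos^2 tau + sigman^2.  As lambda runs over [0, oo),
   u decreases from 1 / A to 0, so the three regimes are read off from the position of the
   vertex u = gamma / A relative to (0, 1 / A].  The limit u -> 0 is the ZF value, computed
   from the zero-forcing constraints h0 . w = 1, h1 . w = 0 and R w in span {h0, h1}. *)

lemma outer_mult_vec: "outer x y *v w = (y \<bullet> w) *\<^sub>R (x::real^'n)"
  by (simp add: vec_eq_iff outer_def matrix_vector_mult_def inner_vec_def sum_distrib_left mult_ac)

lemma Rmat_shift_mult_vec:
  "(Rmat s0 s1 c1 sn h0 h1 + lam *\<^sub>R outer h1 h1) *v w =
     (s0\<^sup>2 * (h0 \<bullet> w) + c1 * (h1 \<bullet> w)) *\<^sub>R h0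
     + ((s1\<^sup>2 + lam) * (h1 \<bullet> w) + c1 * (h0 \<bullet> w)) *\<^sub>R h1 + sn\<^sup>2 *\<^sub>R w"
  unfolding Rmat_def
  by (simp add: matrix_vector_mult_add_rdistrib scaleR_matrix_vector_assoc[symmetric]
      outer_mult_vec algebra_simps)

lemma Rmat_mult_vec:
  "Rmat s0 s1 c1 sn h0 h1 *v w =
     (s0\<^sup>2 * (h0 \<bullet> w) + c1 * (h1 \<bullet> w)) *\<^sub>R h0
     + (s1\<^sup>2 * (h1 \<bullet> w) + c1 * (h0 \<bullet> w)) *\<^sub>R h1 + sn\<^sup>2 *\<^sub>R w"
  using Rmat_shift_mult_vec[where lam = 0] by simp

lemma matrix_inv_right: "invertible (A::real^'n^'n) \<Longrightarrow> A ** matrix_inv A = mat 1"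
  unfolding invertible_def matrix_inv_def by (metis (mono_tags, lifting) someI_ex)

lemma matrix_inv_mult_vec_cancel:
  assumes "invertible (A::real^'n^'n)"
  shows "A *v (matrix_inv A *v b) = b"
  by (simp add: assms matrix_inv_right matrix_vector_mul_assoc)

lemma invertible_if_pos_def:
  fixes A :: "real^'n^'n"
  assumes "\<And>x. x \<noteq> 0 \<Longrightarrow> 0 < x \<bullet> (A *v x)"
  shows "invertible A"
proof -
  have "\<forall>x. A *v x = 0 \<longrightarrow> x = 0" using assms by force
  then show ?thesis using invertible_left_inverse matrix_left_invertible_ker by blast
qed

lemma matrix_inv_pos_def:
  fixes A :: "real^'n^'n"
  assumes pd: "\<And>x. x \<noteq> 0 \<Longrightarrow> 0 < x \<bullet> (A *v x)" and "z \<noteq> 0"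
  shows "0 < z \<bullet> (matrix_inv A *v z)"
proof -
  define x where "x = matrix_inv A *v z"
  have Ax: "A *v x = z"
    unfolding x_def by (rule matrix_inv_mult_vec_cancel[OF invertible_if_pos_def[OF pd]])
  then have "x \<noteq> 0" using \<open>z \<noteq> 0\<close> by auto
  then show ?thesis using pd[of x] Ax by (simp add: x_def inner_commute)
qed

lemma zero_forcing_constraints:
  fixes R :: "real^'n^'n" and H :: "real^'m^'n" and e :: "real^'m"
  assumes pd: "\<And>x. x \<noteq> 0 \<Longrightarrow> 0 < x \<bullet> (R *v x)"
    and inj: "\<And>y. y \<noteq> 0 \<Longrightarrow> H *v y \<noteq> 0"
  defines "w \<equiv> (matrix_inv R ** H ** matrix_inv (transpose H ** matrix_inv R ** H)) *v e"
  shows "transpose H *v w = e" and "\<exists>u. R *v w = H *v u"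
proof -
  define Q where "Q = transpose H ** matrix_inv R ** H"
  have "0 < y \<bullet> (Q *v y)" if "y \<noteq> 0" for y
    using matrix_inv_pos_def[OF pd inj[OF that]]
    by (metis Q_def dot_lmul_matrix inner_commute matrix_vector_mul_assoc transpose_matrix_vector)
  then have invQ: "invertible Q" by (rule invertible_if_pos_def)
  define u where "u = matrix_inv Q *v e"
  have w: "w = matrix_inv R *v (H *v u)"
    unfolding w_def u_def Q_def by (simp add: matrix_vector_mul_assoc matrix_mul_assoc)
  have "transpose H *v w = Q *v u"
    unfolding w Q_def by (simp add: matrix_vector_mul_assoc matrix_mul_assoc)
  also have "\<dots> = e" unfolding u_def using invQ by (rule matrix_inv_mult_vec_cancel)
  finally show "transpose H *v w = e" .
  have "R *v w = H *v u"
    unfolding w using invertible_if_pos_def[OF pd] by (rule matrix_inv_mult_vec_cancel)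
  then show "\<exists>u. R *v w = H *v u" ..
qed

lemma covariance_form_nonneg:
  fixes s0 s1 c1 p q :: real
  assumes "0 < s0" "0 < s1" "- (s0 * s1) \<le> c1" "c1 \<le> s0 * s1"
  shows "0 \<le> s0\<^sup>2 * p\<^sup>2 + s1\<^sup>2 * q\<^sup>2 + 2 * c1 * p * q"
proof -
  have "\<bar>c1\<bar> \<le> s0 * s1" using assms by linarith
  then have "\<bar>c1 * (p * q)\<bar> \<le> s0 * s1 * \<bar>p * q\<bar>"
    by (simp add: abs_mult mult_right_mono)
  then have "- (s0 * s1 * \<bar>p * q\<bar>) \<le> c1 * (p * q)" by linarith
  moreover have "0 \<le> (s0 * \<bar>p\<bar> - s1 * \<bar>q\<bar>)\<^sup>2" by simp
  ultimately show ?thesis by (simp add: power2_eq_square abs_mult algebra_simps)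
qed

lemma Rmat_shift_pos_def:
  fixes h0 h1 x :: "real^'n"
  assumes "0 < s0" "0 < s1" "- (s0 * s1) \<le> c1" "c1 \<le> s0 * s1" "0 < sn" "0 \<le> lam" "x \<noteq> 0"
  shows "0 < x \<bullet> ((Rmat s0 s1 c1 sn h0 h1 + lam *\<^sub>R outer h1 h1) *v x)"
proof -
  define p q where "p = h0 \<bullet> x" and "q = h1 \<bullet> x"
  have "x \<bullet> ((Rmat s0 s1 c1 sn h0 h1 + lam *\<^sub>R outer h1 h1) *v x)
      = (s0\<^sup>2 * p\<^sup>2 + s1\<^sup>2 * q\<^sup>2 + 2 * c1 * p * q) + lam * q\<^sup>2 + sn\<^sup>2 * (x \<bullet> x)"
    unfolding Rmat_shift_mult_vec p_def q_def
    by (simp add: inner_add_right inner_commute power2_eq_square algebra_simps)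
  moreover have "0 \<le> s0\<^sup>2 * p\<^sup>2 + s1\<^sup>2 * q\<^sup>2 + 2 * c1 * p * q"
    using covariance_form_nonneg assms by blast
  ultimately show ?thesis using assms by (simp add: add_nonneg_pos)
qed

lemma unit_vectors_independent:
  fixes h0 h1 :: "real^'n"
  assumes "h0 \<bullet> h0 = 1" "h1 \<bullet> h1 = 1" "h0 \<bullet> h1 = s" "s\<^sup>2 < 1"
    and "a *\<^sub>R h0 + b *\<^sub>R h1 = 0"
  shows "a = 0" "b = 0"
proof -
  have "h0 \<bullet> (a *\<^sub>R h0 + b *\<^sub>R h1) = 0" "h1 \<bullet> (a *\<^sub>R h0 + b *\<^sub>R h1) = 0"
    using assms(5) by simp_all
  then have "a + b * s = 0" "a * s + b = 0"
    using assms(1-3) by (simp_all add: inner_add_right inner_commute)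
  then have "a * (1 - s\<^sup>2) = 0" "b * (1 - s\<^sup>2) = 0" by algebra+
  then show "a = 0" "b = 0" using assms(4) by simp_all
qed

lemma rzf_mse_scalar_identity:
  fixes s c sn s0 s1 c1 lam p q :: real
  assumes c: "0 < c" and sc: "s\<^sup>2 + c\<^sup>2 = 1" and p: "0 < p"
    and g: "g = lam * c\<^sup>2 + s1\<^sup>2 * c\<^sup>2 + sn\<^sup>2" and g_pos: "0 < g"
    and E0: "1 = (s0\<^sup>2 * p + c1 * q) + ((s1\<^sup>2 + lam) * q + c1 * p) * s + sn\<^sup>2 * p"
    and E1: "s = (s0\<^sup>2 * p + c1 * q) * s + ((s1\<^sup>2 + lam) * q + c1 * p) + sn\<^sup>2 * q"
  shows "(p - lam * q\<^sup>2) / p\<^sup>2 - 2 * (s0\<^sup>2 * p + c1 * q) / p + s0\<^sup>2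
     = (sn\<^sup>2 * (s / c) - c1 * c)\<^sup>2 * (s1\<^sup>2 * c\<^sup>2 + sn\<^sup>2) / g\<^sup>2
       - 2 * sn\<^sup>2 * (sn\<^sup>2 * (s / c) - c1 * c) * (s / c) / g + sn\<^sup>2 * ((s / c)\<^sup>2 + 1)"
proof -
  \<comment> \<open>the ratio q / p is what makes the MSE depend on lam only through g\<close>
  have qg: "q * g = p * (s * sn\<^sup>2 - c1 * c\<^sup>2)" using E0 E1 sc g by algebra
  show ?thesis using c p g_pos
    apply (simp add: field_simps power2_eq_square)
    using qg E0 E1 sc g by algebra
qed

lemma MSE_closed_form:
  fixes h0 h1 :: "real^'n"
  assumes h00: "h0 \<bullet> h0 = 1" and h11: "h1 \<bullet> h1 = 1" and h01: "h0 \<bullet> h1 = s"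
    and cov: "0 < s0" "0 < s1" "- (s0 * s1) \<le> c1" "c1 \<le> s0 * s1"
    and sn: "0 < sn" and lam: "0 \<le> lam" and c: "0 < c" and sc: "s\<^sup>2 + c\<^sup>2 = 1"
  defines "g \<equiv> lam * c\<^sup>2 + s1\<^sup>2 * c\<^sup>2 + sn\<^sup>2"
  shows "MSE s0 s1 c1 sn h0 h1 lam
     = (sn\<^sup>2 * (s / c) - c1 * c)\<^sup>2 * (s1\<^sup>2 * c\<^sup>2 + sn\<^sup>2) / g\<^sup>2
       - 2 * sn\<^sup>2 * (sn\<^sup>2 * (s / c) - c1 * c) * (s / c) / g + sn\<^sup>2 * ((s / c)\<^sup>2 + 1)"
proof -
  define Rl where "Rl = Rmat s0 s1 c1 sn h0 h1 + lam *\<^sub>R outer h1 h1"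
  define v where "v = matrix_inv Rl *v h0"
  define p q where "p = h0 \<bullet> v" and "q = h1 \<bullet> v"
  have pd: "0 < x \<bullet> (Rl *v x)" if "x \<noteq> 0" for x
    unfolding Rl_def using Rmat_shift_pos_def[OF cov sn lam that] .
  have Rlv: "Rl *v v = h0"
    unfolding v_def by (rule matrix_inv_mult_vec_cancel[OF invertible_if_pos_def[OF pd]])
  then have "v \<noteq> 0" using h00 by auto
  then have p_pos: "0 < p" using pd[of v] Rlv by (simp add: p_def inner_commute)
  have h0_eq: "h0 = (s0\<^sup>2 * p + c1 * q) *\<^sub>R h0 + ((s1\<^sup>2 + lam) * q + c1 * p) *\<^sub>R h1 + sn\<^sup>2 *\<^sub>R v"
    using Rlv unfolding Rl_def Rmat_shift_mult_vec p_def q_def by simp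
  have E0: "1 = (s0\<^sup>2 * p + c1 * q) + ((s1\<^sup>2 + lam) * q + c1 * p) * s + sn\<^sup>2 * p"
    using arg_cong[OF h0_eq, of "inner h0"] h00 h01 by (simp add: inner_add_right p_def)
  have E1: "s = (s0\<^sup>2 * p + c1 * q) * s + ((s1\<^sup>2 + lam) * q + c1 * p) + sn\<^sup>2 * q"
    using arg_cong[OF h0_eq, of "inner h1"] h11 h01 by (simp add: inner_add_right q_def inner_commute)
  have "Rmat s0 s1 c1 sn h0 h1 *v v = h0 - (lam * q) *\<^sub>R h1"
    using Rlv unfolding Rl_def q_def
    by (simp add: matrix_vector_mult_add_rdistrib scaleR_matrix_vector_assoc[symmetric]
        outer_mult_vec algebra_simps)
  then have Rw: "Rmat s0 s1 c1 sn h0 h1 *v ((1 / p) *\<^sub>R v) = (1 / p) *\<^sub>R (h0 - (lam * q) *\<^sub>R h1)"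
    by (simp add: matrix_scaleR_vector_ac scaleR_matrix_vector_assoc[symmetric])
  have J: "J_MSE s0 s1 c1 sn h0 h1 ((1 / p) *\<^sub>R v)
      = (p - lam * q\<^sup>2) / p\<^sup>2 - 2 * (s0\<^sup>2 * p + c1 * q) / p + s0\<^sup>2"
    unfolding J_MSE_def rvec_def
    by (simp add: Rw inner_diff_right inner_add_right inner_commute[of v] p_def[symmetric]
        q_def[symmetric] power2_eq_square field_simps)
  have w: "w_RZF s0 s1 c1 sn h0 h1 lam = (1 / p) *\<^sub>R v"
    unfolding w_RZF_def Let_def Rl_def[symmetric] v_def[symmetric] p_def ..
  have g_pos: "0 < g" unfolding g_def using lam c sn by (simp add: add_nonneg_pos)
  show ?thesis unfolding MSE_def w J
    using rzf_mse_scalar_identity[OF c sc p_pos meta_eq_to_obj_eq[OF g_def] g_pos E0 E1] .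
qed

lemma Hmat_mult_vec: "Hmat h0 h1 *v y = (y $ 0) *\<^sub>R h0 + (y $ 1) *\<^sub>R h1"
proof -
  have two: "(2::2) = 0" by simp
  show ?thesis by (simp add: vec_eq_iff Hmat_def matrix_vector_mult_def sum_2 two mult_ac)
qed

lemma transpose_Hmat_mult_vec:
  "(transpose (Hmat h0 h1) *v w) $ 0 = h0 \<bullet> w"
  "(transpose (Hmat h0 h1) *v w) $ 1 = h1 \<bullet> (w::real^'n)"
  unfolding transpose_def Hmat_def matrix_vector_mult_def inner_vec_def
  by (simp_all add: mult.commute)

lemma J_MSE_w_ZF:
  fixes h0 h1 :: "real^'n"
  assumes h00: "h0 \<bullet> h0 = 1" and h11: "h1 \<bullet> h1 = 1" and h01: "h0 \<bullet> h1 = s"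
    and cov: "0 < s0" "0 < s1" "- (s0 * s1) \<le> c1" "c1 \<le> s0 * s1"
    and sn: "0 < sn" and c: "0 < c" and sc: "s\<^sup>2 + c\<^sup>2 = 1"
  shows "J_MSE s0 s1 c1 sn h0 h1 (w_ZF s0 s1 c1 sn h0 h1) = sn\<^sup>2 * ((s / c)\<^sup>2 + 1)"
proof -
  define w where "w = w_ZF s0 s1 c1 sn h0 h1"
  have pd: "0 < x \<bullet> (Rmat s0 s1 c1 sn h0 h1 *v x)" if "x \<noteq> 0" for x
    using Rmat_shift_pos_def[OF cov sn order_refl that] by simp
  have "Hmat h0 h1 *v y \<noteq> 0" if "y \<noteq> 0" for y
  proof
    assume "Hmat h0 h1 *v y = 0"
    moreover have "s\<^sup>2 < 1" using sc c by (smt (verit) zero_less_power2)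
    ultimately have "y $ 0 = 0" "y $ 1 = 0"
      using unit_vectors_independent[OF h00 h11 h01] unfolding Hmat_mult_vec by blast+
    moreover have two: "(2::2) = 0" by simp
    ultimately show False using that by (simp add: vec_eq_iff forall_2 two)
  qed
  note ZF = zero_forcing_constraints[OF pd this, of e1, folded w_ZF_def[unfolded Let_def]]
  have Hw: "transpose (Hmat h0 h1) *v w = e1" using ZF(1) unfolding w_def .
  have p1: "h0 \<bullet> w = 1" and q0: "h1 \<bullet> w = 0"
    using arg_cong[OF Hw, of "\<lambda>x. x $ 0"] arg_cong[OF Hw, of "\<lambda>x. x $ 1"]
    unfolding transpose_Hmat_mult_vec by (simp_all add: e1_def)
  have Rw: "Rmat s0 s1 c1 sn h0 h1 *v w = s0\<^sup>2 *\<^sub>R h0 + c1 *\<^sub>R h1 + sn\<^sup>2 *\<^sub>R w"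
    unfolding Rmat_mult_vec p1 q0 by simp
  obtain u where "Rmat s0 s1 c1 sn h0 h1 *v w = Hmat h0 h1 *v u" using ZF(2) w_def by blast
  then have snw: "sn\<^sup>2 *\<^sub>R w = (u $ 0 - s0\<^sup>2) *\<^sub>R h0 + (u $ 1 - c1) *\<^sub>R h1"
    unfolding Rw Hmat_mult_vec by (simp add: algebra_simps)
  have "w = (1 / sn\<^sup>2) *\<^sub>R (sn\<^sup>2 *\<^sub>R w)" using sn by simp
  also have "\<dots> = ((u $ 0 - s0\<^sup>2) / sn\<^sup>2) *\<^sub>R h0 + ((u $ 1 - c1) / sn\<^sup>2) *\<^sub>R h1"
    unfolding snw by (simp add: scaleR_add_right)
  finally obtain a b where wab: "w = a *\<^sub>R h0 + b *\<^sub>R h1" by blast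
  have "a + b * s = 1" "a * s + b = 0"
    using p1 q0 h00 h11 h01 unfolding wab by (simp_all add: inner_add_right inner_commute)
  then have "a * c\<^sup>2 = 1" using sc by algebra
  then have "(s / c)\<^sup>2 + 1 = a" using sc c by (simp add: power_divide field_simps)
  moreover have "w \<bullet> w = a" using p1 q0 unfolding wab by (simp add: inner_add_left)
  ultimately show ?thesis
    unfolding w_def[symmetric] J_MSE_def rvec_def Rw using p1 q0
    by (simp add: inner_add_right inner_commute)
qed

locale rzf_profile =
  fixes A k a \<gamma> C :: real and M :: "real \<Rightarrow> real"
  assumes A_pos: "0 < A" and k_pos: "0 < k" and a_pos: "0 < a"
    and M_eq: "0 \<le> lam \<Longrightarrow> M lam = a * (A / (lam * k + A)\<^sup>2 - 2 * \<gamma> / (lam * k + A)) + C"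
begin

lemma M_diff:
  assumes "0 \<le> lam" "0 \<le> mu"
  shows "M lam - M mu = a * (1 / (lam * k + A) - 1 / (mu * k + A))
    * (A * (1 / (lam * k + A) + 1 / (mu * k + A)) - 2 * \<gamma>)"
proof -
  have parabola: "a * (A * x\<^sup>2 - 2 * \<gamma> * x) + C - (a * (A * y\<^sup>2 - 2 * \<gamma> * y) + C)
      = a * (x - y) * (A * (x + y) - 2 * \<gamma>)" for x y
    by (simp add: power2_eq_square algebra_simps)
  show ?thesis
    using parabola[of "1 / (lam * k + A)" "1 / (mu * k + A)"]
    unfolding M_eq[OF assms(1)] M_eq[OF assms(2)] by (simp add: power_one_over)
qed

lemma strict_antimono:
  assumes "\<gamma> \<le> 0" "0 \<le> lam" "lam < mu"
  shows "M mu < M lam"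
proof -
  have "0 < lam * k + A" "lam * k + A < mu * k + A"
    using assms A_pos k_pos by (simp_all add: add_nonneg_pos)
  then have "0 < 1 / (lam * k + A) - 1 / (mu * k + A)" "0 < A * (1 / (lam * k + A) + 1 / (mu * k + A))"
    using A_pos by (simp_all add: frac_less2 add_pos_pos)
  then have "0 < M lam - M mu"
    using M_diff[of lam mu] assms a_pos by simp
  then show ?thesis by simp
qed

lemma tendsto_at_top: "(M \<longlongrightarrow> C) at_top"
proof -
  have "((\<lambda>lam. a * (A / (lam * k + A)\<^sup>2 - 2 * \<gamma> / (lam * k + A)) + C) \<longlongrightarrow> C) at_top"
    using k_pos by real_asymp
  moreover have "\<forall>\<^sub>F lam in at_top. a * (A / (lam * k + A)\<^sup>2 - 2 * \<gamma> / (lam * k + A)) + C = M lam"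
    using eventually_ge_at_top[of 0] by eventually_elim (simp add: M_eq)
  ultimately show ?thesis by (rule Lim_transform_eventually)
qed

lemma INF_eq:
  assumes "\<gamma> \<le> 0"
  shows "(INF lam\<in>{0..}. M lam) = C"
proof -
  have C_le: "C \<le> M lam" if "0 \<le> lam" for lam
  proof (rule tendsto_upperbound[OF tendsto_at_top])
    show "\<forall>\<^sub>F mu in at_top. M mu \<le> M lam"
      using eventually_ge_at_top[of lam] by eventually_elim
        (use strict_antimono[OF assms that] in \<open>fastforce simp: le_less\<close>)
  qed simp
  then have "bdd_below (M ` {0..})" by (intro bdd_belowI2[of _ C]) simp
  then have "(INF lam\<in>{0..}. M lam) \<le> C"
    by (intro tendsto_lowerbound[OF tendsto_at_top])
      (auto intro: cINF_lower eventually_mono[OF eventually_ge_at_top[of 0]])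
  moreover have "C \<le> (INF lam\<in>{0..}. M lam)" by (rule cINF_greatest) (auto intro: C_le)
  ultimately show ?thesis by simp
qed

lemma vertex_minimal:
  assumes "0 < \<gamma>" "\<gamma> < 1"
  shows "0 < (A / \<gamma> - A) / k" and "0 \<le> lam \<Longrightarrow> M ((A / \<gamma> - A) / k) \<le> M lam"
proof -
  show pos: "0 < (A / \<gamma> - A) / k" using assms A_pos k_pos by (simp add: field_simps)
  assume "0 \<le> lam"
  have "M lam - M ((A / \<gamma> - A) / k) = a * A * (1 / (lam * k + A) - \<gamma> / A)\<^sup>2"
    using M_diff[OF \<open>0 \<le> lam\<close> less_imp_le[OF pos]] A_pos k_pos assms
    by (simp add: field_simps power2_eq_square)
  also have "\<dots> \<ge> 0" using a_pos A_pos by simp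
  finally show "M ((A / \<gamma> - A) / k) \<le> M lam" by simp
qed

lemma origin_minimal:
  assumes "1 \<le> \<gamma>" "0 \<le> lam"
  shows "M 0 \<le> M lam"
proof -
  have "0 < A" "A \<le> lam * k + A" using assms A_pos k_pos by simp_all
  then have u: "0 < 1 / (lam * k + A)" "1 / (lam * k + A) \<le> 1 / A"
    by (simp_all add: frac_le)
  then have "A * (1 / (lam * k + A)) \<le> A * (1 / A)" using A_pos by (intro mult_left_mono) auto
  then have "A * (1 / (lam * k + A) + 1 / A) \<le> 2" using A_pos by (simp add: distrib_left)
  then have "0 \<le> (1 / (lam * k + A) - 1 / A) * (A * (1 / (lam * k + A) + 1 / A) - 2 * \<gamma>)"
    using u assms by (intro mult_nonpos_nonpos) auto
  then have "0 \<le> M lam - M 0"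
    unfolding M_diff[OF assms(2) order_refl] mult.assoc using a_pos by simp
  then show ?thesis by simp
qed

end

lemma rzf_profile_of_closed_form:
  assumes "0 < A" "0 < k" "d \<noteq> 0"
    and "\<And>lam. 0 \<le> lam \<Longrightarrow> M lam = d\<^sup>2 * A / (lam * k + A)\<^sup>2 - 2 * b * d / (lam * k + A) + C"
  shows "rzf_profile A k (d\<^sup>2) (b / d) C M"
proof
  fix lam :: real assume "0 \<le> lam"
  then have "0 < lam * k + A" using assms(1,2) by (simp add: add_nonneg_pos)
  with assms(3) have "d * (lam * k + A) \<noteq> 0" by simp
  with \<open>0 < lam * k + A\<close> show "M lam = d\<^sup>2 * (A / (lam * k + A)\<^sup>2 - 2 * (b / d) / (lam * k + A)) + C"
    unfolding assms(4)[OF \<open>0 \<le> lam\<close>] using assms(3) by (simp add: field_simps power2_eq_square)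
qed (use assms in simp_all)

theorem theorem1:
  fixes h0 h1 :: "real ^ 'n" and \<tau> \<sigma>0 \<sigma>1 \<sigma>n c1 :: real
  assumes "CARD('n) \<ge> 2"
    and "norm h0 = 1" and "norm h1 = 1" and "h0 \<bullet> h1 = sin \<tau>"
    and "- (pi / 2) < \<tau>" and "\<tau> < pi / 2"
    and "\<sigma>0 > 0" and "\<sigma>1 > 0" and "\<sigma>n > 0"
    and "- (\<sigma>0 * \<sigma>1) \<le> c1" and "c1 \<le> \<sigma>0 * \<sigma>1"
  defines "\<delta> \<equiv> \<sigma>n\<^sup>2 * tan \<tau> - c1 * cos \<tau>"
    and "g \<equiv> (\<lambda>lam. lam * (cos \<tau>)\<^sup>2 + \<sigma>1\<^sup>2 * (cos \<tau>)\<^sup>2 + \<sigma>n\<^sup>2)"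
    and "M \<equiv> MSE \<sigma>0 \<sigma>1 c1 \<sigma>n h0 h1"
    and "\<gamma> \<equiv> \<sigma>n\<^sup>2 * tan \<tau> / (\<sigma>n\<^sup>2 * tan \<tau> - c1 * cos \<tau>)"
  shows "(\<forall>lam \<ge> 0. g lam > 0 \<and>
            M lam = \<delta>\<^sup>2 * (\<sigma>1\<^sup>2 * (cos \<tau>)\<^sup>2 + \<sigma>n\<^sup>2) / (g lam)\<^sup>2
                    - 2 * \<sigma>n\<^sup>2 * \<delta> * tan \<tau> / g lam + \<sigma>n\<^sup>2 * ((tan \<tau>)\<^sup>2 + 1))
     \<and> (\<delta> = 0 \<longrightarrow> (\<forall>lam \<ge> 0. M lam = \<sigma>n\<^sup>2 * ((tan \<tau>)\<^sup>2 + 1)))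
     \<and> (\<delta> \<noteq> 0 \<and> \<gamma> \<le> 0 \<longrightarrow>
          (\<forall>a b. 0 \<le> a \<and> a < b \<longrightarrow> M b < M a)
          \<and> (M \<longlongrightarrow> J_MSE \<sigma>0 \<sigma>1 c1 \<sigma>n h0 h1 (w_ZF \<sigma>0 \<sigma>1 c1 \<sigma>n h0 h1)) at_top
          \<and> (INF lam\<in>{0..}. M lam) = J_MSE \<sigma>0 \<sigma>1 c1 \<sigma>n h0 h1 (w_ZF \<sigma>0 \<sigma>1 c1 \<sigma>n h0 h1))
     \<and> (\<delta> \<noteq> 0 \<and> 0 < \<gamma> \<and> \<gamma> < 1 \<longrightarrow>
          (let lam\<^sub>0 = - (c1 * (\<sigma>1\<^sup>2 * (cos \<tau>)\<^sup>2 + \<sigma>n\<^sup>2)) / (\<sigma>n\<^sup>2 * sin \<tau>)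
           in lam\<^sub>0 > 0 \<and> (\<forall>lam \<ge> 0. M lam\<^sub>0 \<le> M lam)))
     \<and> (\<delta> \<noteq> 0 \<and> 1 \<le> \<gamma> \<longrightarrow> (\<forall>lam \<ge> 0. M 0 \<le> M lam))"
proof -
  have c: "0 < cos \<tau>" using assms(5,6) by (rule cos_gt_zero_pi)
  have unit: "h0 \<bullet> h0 = 1" "h1 \<bullet> h1 = 1" using assms(2,3) by (simp_all add: norm_eq_1)
  note model = unit assms(4,7,8,10,11,9)
  have closed: "M lam = \<delta>\<^sup>2 * (\<sigma>1\<^sup>2 * (cos \<tau>)\<^sup>2 + \<sigma>n\<^sup>2) / (g lam)\<^sup>2
      - 2 * \<sigma>n\<^sup>2 * \<delta> * tan \<tau> / g lam + \<sigma>n\<^sup>2 * ((tan \<tau>)\<^sup>2 + 1)" if "0 \<le> lam" for lam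
    unfolding M_def \<delta>_def g_def tan_def by (rule MSE_closed_form[OF model that c sin_cos_squared_add])
  have ZF: "J_MSE \<sigma>0 \<sigma>1 c1 \<sigma>n h0 h1 (w_ZF \<sigma>0 \<sigma>1 c1 \<sigma>n h0 h1) = \<sigma>n\<^sup>2 * ((tan \<tau>)\<^sup>2 + 1)"
    unfolding tan_def by (rule J_MSE_w_ZF[OF model c sin_cos_squared_add])
  have g_pos: "0 < g lam" if "0 \<le> lam" for lam
    unfolding g_def using that assms(9) by (simp add: add_nonneg_pos)
  have profile: "rzf_profile (\<sigma>1\<^sup>2 * (cos \<tau>)\<^sup>2 + \<sigma>n\<^sup>2) ((cos \<tau>)\<^sup>2) (\<delta>\<^sup>2) \<gamma>
      (\<sigma>n\<^sup>2 * ((tan \<tau>)\<^sup>2 + 1)) M" if "\<delta> \<noteq> 0"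
    unfolding \<gamma>_def \<delta>_def[symmetric]
    by (rule rzf_profile_of_closed_form)
      (use c assms(9) that closed in \<open>simp_all add: add_nonneg_pos g_def add.assoc mult_ac\<close>)
  have lam\<^sub>0: "- (c1 * (\<sigma>1\<^sup>2 * (cos \<tau>)\<^sup>2 + \<sigma>n\<^sup>2)) / (\<sigma>n\<^sup>2 * sin \<tau>)
      = ((\<sigma>1\<^sup>2 * (cos \<tau>)\<^sup>2 + \<sigma>n\<^sup>2) / \<gamma> - (\<sigma>1\<^sup>2 * (cos \<tau>)\<^sup>2 + \<sigma>n\<^sup>2)) / (cos \<tau>)\<^sup>2"
    if "\<delta> \<noteq> 0" "0 < \<gamma>"
  proof -
    have "sin \<tau> \<noteq> 0" using that unfolding \<gamma>_def tan_def by auto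
    then show ?thesis using that c assms(9) unfolding \<gamma>_def \<delta>_def tan_def
      by (simp add: field_simps power2_eq_square)
  qed
  show ?thesis
    using g_pos closed lam\<^sub>0 rzf_profile.strict_antimono[OF profile]
      rzf_profile.tendsto_at_top[OF profile] rzf_profile.INF_eq[OF profile]
      rzf_profile.vertex_minimal[OF profile] rzf_profile.origin_minimal[OF profile]
    by (auto simp: ZF Let_def)
qed

end
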